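(* Consider the system \[ \begin{aligned} \dot S_h(t)&=\beta_h-C_{vh}\frac{I_v(t)}{N_v(t)}S_h(t)-\mu_hS_h(t),\\ \dot I_h(t)&=C_{vh}\frac{I_v(t-\tau)}{N_v(t-\tau)}S_h(t-\tau)-\mu_hI_h(t),\\ \dot S_v(t)&=\beta_v-C_{hv}I_h(t)S_v(t)-\mu_vS_v(t),\\ \dot I_v(t)&=C_{hv}I_h(t)S_v(t)-\mu_vI_v(t), \end{aligned} \] with $N_v=S_v+I_v$, positive parameters $\beta_h,\beta_v,\mu_h,\mu_v,C_{vh},C_{hv}$ and $\tau\ge0$. Let $R_0=\sqrt{\dfrac{C_{vh}C_{hv}\beta_h}{\mu_h^2\mu_v}}$. Then the system has a unique endemic equilibrium, i.e. an equilibrium $E^*=(S_h^*,I_h^*,S_v^*,I_v^* )^T$ with all four components positive, if and only if $R_0>1$. *)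

theory Defs
  imports Complex_Main
begin

text \<open>Right-hand side of the delayed system. The state is (S_h, I_h, S_v, I_v).
  The first argument is the current state x(t), the second the delayed state x(t - tau).\<close>
definition host_vector_rhs ::
  "real \<Rightarrow> real \<Rightarrow> real \<Rightarrow> real \<Rightarrow> real \<Rightarrow> real \<Rightarrow>
   real \<times> real \<times> real \<times> real \<Rightarrow> real \<times> real \<times> real \<times> real \<Rightarrow> real \<times> real \<times> real \<times> real"
  where
  "host_vector_rhs \<beta>h \<beta>v \<mu>h \<mu>v Cvh Chv x xd =
     (case x of (Sh, Ih, Sv, Iv) \<Rightarrow> case xd of (Shd, Ihd, Svd, Ivd) \<Rightarrow>
       (\<beta>h - Cvh * (Iv / (Sv + Iv)) * Sh - \<mu>h * Sh,
        Cvh * (Ivd / (Svd + Ivd)) * Shd - \<mu>h * Ih,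
        \<beta>v - Chv * Ih * Sv - \<mu>v * Sv,
        Chv * Ih * Sv - \<mu>v * Iv))"

text \<open>An equilibrium is a constant solution: the state E, used both as current
  and as delayed state, makes the right-hand side vanish (independently of tau).\<close>
definition is_equilibrium ::
  "real \<Rightarrow> real \<Rightarrow> real \<Rightarrow> real \<Rightarrow> real \<Rightarrow> real \<Rightarrow> real \<times> real \<times> real \<times> real \<Rightarrow> bool"
  where
  "is_equilibrium \<beta>h \<beta>v \<mu>h \<mu>v Cvh Chv E \<longleftrightarrow> host_vector_rhs \<beta>h \<beta>v \<mu>h \<mu>v Cvh Chv E E = (0, 0, 0, 0)"

definition is_endemic_equilibrium ::
  "real \<Rightarrow> real \<Rightarrow> real \<Rightarrow> real \<Rightarrow> real \<Rightarrow> real \<Rightarrow> real \<times> real \<times> real \<times> real \<Rightarrow> bool"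
  where
  "is_endemic_equilibrium \<beta>h \<beta>v \<mu>h \<mu>v Cvh Chv E \<longleftrightarrow>
     is_equilibrium \<beta>h \<beta>v \<mu>h \<mu>v Cvh Chv E \<and>
     (case E of (Sh, Ih, Sv, Iv) \<Rightarrow> Sh > 0 \<and> Ih > 0 \<and> Sv > 0 \<and> Iv > 0)"

definition R0 :: "real \<Rightarrow> real \<Rightarrow> real \<Rightarrow> real \<Rightarrow> real \<Rightarrow> real \<Rightarrow> real" where
  "R0 \<beta>h \<beta>v \<mu>h \<mu>v Cvh Chv = sqrt (Cvh * Chv * \<beta>h / (\<mu>h ^ 2 * \<mu>v))"

end

theory Submission
  imports Defs
begin

text \<open>At an endemic equilibrium both total populations are at their demographic equilibria
  \<open>\<beta>h/\<mu>h\<close> and \<open>\<beta>v/\<mu>v\<close>, the vector equations express \<open>S_v, I_v\<close> through \<open>I_h\<close>, and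
  the remaining host equation, after cancelling the factor \<open>I_h > 0\<close>, becomes the linear
  equation \<open>I_h \<mu>_h C_hv (C_vh + \<mu>_h) = C_vh C_hv \<beta>_h - \<mu>_h\<^sup>2 \<mu>_v\<close>. Its unique solution is
  positive exactly when \<open>R_0 > 1\<close>, and all other components are then positive too.\<close>

definition equilibrium_state_of_Ih ::
  "real \<Rightarrow> real \<Rightarrow> real \<Rightarrow> real \<Rightarrow> real \<Rightarrow> real \<Rightarrow> real \<times> real \<times> real \<times> real" where
  "equilibrium_state_of_Ih \<beta>h \<beta>v \<mu>h \<mu>v Chv Ih =
     (\<beta>h / \<mu>h - Ih, Ih, \<beta>v / (\<mu>v + Chv * Ih), \<beta>v / \<mu>v - \<beta>v / (\<mu>v + Chv * Ih))"

lemma vector_equilibrium_iff: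
  fixes \<beta>v \<mu>v Chv Ih Sv Iv :: real
  assumes "\<mu>v > 0" "\<mu>v + Chv * Ih > 0"
  shows "(\<beta>v - Chv * Ih * Sv - \<mu>v * Sv = 0 \<and> Chv * Ih * Sv - \<mu>v * Iv = 0) \<longleftrightarrow>
         Sv = \<beta>v / (\<mu>v + Chv * Ih) \<and> Iv = \<beta>v / \<mu>v - Sv"
  using assms by (auto simp: field_simps)

lemma vector_prevalence_at_equilibrium:
  fixes \<beta>v \<mu>v Chv Ih Sv Iv :: real
  assumes "\<beta>v \<noteq> 0" "\<mu>v > 0"
    and susceptible: "\<beta>v - Chv * Ih * Sv - \<mu>v * Sv = 0"
    and infected: "Chv * Ih * Sv - \<mu>v * Iv = 0"
  shows "Iv / (Sv + Iv) = Chv * Ih / (\<mu>v + Chv * Ih)"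
proof -
  have Sv: "Sv * (\<mu>v + Chv * Ih) = \<beta>v"
    using susceptible by (simp add: algebra_simps)
  with \<open>\<beta>v \<noteq> 0\<close> have "\<mu>v + Chv * Ih \<noteq> 0"
    by auto
  have total: "Sv + Iv = \<beta>v / \<mu>v"
    using susceptible infected \<open>\<mu>v > 0\<close> by (simp add: field_simps)
  have Iv: "Iv = Chv * Ih * Sv / \<mu>v"
    using infected \<open>\<mu>v > 0\<close> by (simp add: field_simps)
  have "Iv / (Sv + Iv) = (Chv * Ih * Sv / \<mu>v) / (\<beta>v / \<mu>v)"
    unfolding total by (simp add: Iv)
  also have "\<dots> = Chv * Ih * Sv / \<beta>v"
    using \<open>\<mu>v > 0\<close> by simp
  also have "\<dots> = Chv * Ih / (\<mu>v + Chv * Ih)"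
    using Sv \<open>\<beta>v \<noteq> 0\<close> \<open>\<mu>v + Chv * Ih \<noteq> 0\<close> by (auto simp: field_simps)
  finally show ?thesis .
qed

lemma host_equilibrium_iff:
  fixes \<beta>h \<mu>h \<mu>v Cvh Chv Sh Ih :: real
  assumes "\<mu>h > 0" "Ih > 0" "\<mu>v + Chv * Ih > 0"
  defines "force \<equiv> Cvh * (Chv * Ih / (\<mu>v + Chv * Ih))"
  shows "(\<beta>h - force * Sh - \<mu>h * Sh = 0 \<and> force * Sh - \<mu>h * Ih = 0) \<longleftrightarrow>
         Sh = \<beta>h / \<mu>h - Ih \<and> Ih * (\<mu>h * Chv * (Cvh + \<mu>h)) = Cvh * Chv * \<beta>h - \<mu>h\<^sup>2 * \<mu>v"
proof -
  have "force * Sh - \<mu>h * Ih = 0 \<longleftrightarrow> Ih * (Cvh * Chv * Sh - \<mu>h * (\<mu>v + Chv * Ih)) = 0"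
    using assms(3) by (auto simp: force_def field_simps)
  also have "\<dots> \<longleftrightarrow> Cvh * Chv * Sh = \<mu>h * (\<mu>v + Chv * Ih)"
    using assms(2) by simp
  finally have infected: "force * Sh - \<mu>h * Ih = 0 \<longleftrightarrow> Cvh * Chv * Sh = \<mu>h * (\<mu>v + Chv * Ih)" .
  have "(\<beta>h - force * Sh - \<mu>h * Sh = 0 \<and> force * Sh - \<mu>h * Ih = 0) \<longleftrightarrow>
        Sh = \<beta>h / \<mu>h - Ih \<and> Cvh * Chv * Sh = \<mu>h * (\<mu>v + Chv * Ih)"
    using assms(1) infected by (auto simp: field_simps)
  also have "\<dots> \<longleftrightarrow> Sh = \<beta>h / \<mu>h - Ih \<and> Cvh * Chv * (\<beta>h / \<mu>h - Ih) = \<mu>h * (\<mu>v + Chv * Ih)"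
    by auto
  also have "Cvh * Chv * (\<beta>h / \<mu>h - Ih) = \<mu>h * (\<mu>v + Chv * Ih) \<longleftrightarrow>
      Ih * (\<mu>h * Chv * (Cvh + \<mu>h)) = Cvh * Chv * \<beta>h - \<mu>h\<^sup>2 * \<mu>v"
    using assms(1) by (auto simp: field_simps power2_eq_square)
  finally show ?thesis .
qed

lemma equilibrium_with_infected_hosts_iff:
  fixes \<beta>h \<beta>v \<mu>h \<mu>v Cvh Chv Sh Ih Sv Iv :: real
  assumes "\<beta>v > 0" "\<mu>h > 0" "\<mu>v > 0" "Chv > 0" "Ih > 0"
  shows "is_equilibrium \<beta>h \<beta>v \<mu>h \<mu>v Cvh Chv (Sh, Ih, Sv, Iv) \<longleftrightarrow>
    Ih * (\<mu>h * Chv * (Cvh + \<mu>h)) = Cvh * Chv * \<beta>h - \<mu>h\<^sup>2 * \<mu>v \<and>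
    (Sh, Ih, Sv, Iv) = equilibrium_state_of_Ih \<beta>h \<beta>v \<mu>h \<mu>v Chv Ih"
    (is "_ \<longleftrightarrow> ?linear \<and> _")
proof -
  let ?vector = "\<beta>v - Chv * Ih * Sv - \<mu>v * Sv = 0 \<and> Chv * Ih * Sv - \<mu>v * Iv = 0"
  let ?host = "\<beta>h - Cvh * (Iv / (Sv + Iv)) * Sh - \<mu>h * Sh = 0 \<and>
    Cvh * (Iv / (Sv + Iv)) * Sh - \<mu>h * Ih = 0"
  have "\<mu>v + Chv * Ih > 0"
    using assms by (simp add: add_pos_pos)
  have host: "?host \<longleftrightarrow> Sh = \<beta>h / \<mu>h - Ih \<and> ?linear" if ?vector
  proof -
    have "Iv / (Sv + Iv) = Chv * Ih / (\<mu>v + Chv * Ih)"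
      using vector_prevalence_at_equilibrium[of \<beta>v \<mu>v Chv Ih Sv Iv] that assms by simp
    then show ?thesis
      using host_equilibrium_iff \<open>\<mu>v + Chv * Ih > 0\<close> assms by simp
  qed
  have "is_equilibrium \<beta>h \<beta>v \<mu>h \<mu>v Cvh Chv (Sh, Ih, Sv, Iv) \<longleftrightarrow> ?vector \<and> ?host"
    by (auto simp: is_equilibrium_def host_vector_rhs_def)
  also have "\<dots> \<longleftrightarrow> ?vector \<and> Sh = \<beta>h / \<mu>h - Ih \<and> ?linear"
    using host by blast
  also have "\<dots> \<longleftrightarrow> ?linear \<and> (Sh, Ih, Sv, Iv) = equilibrium_state_of_Ih \<beta>h \<beta>v \<mu>h \<mu>v Chv Ih"
    using vector_equilibrium_iff[of \<mu>v Chv Ih \<beta>v Sv Iv] \<open>\<mu>v + Chv * Ih > 0\<close> assms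
    by (auto simp: equilibrium_state_of_Ih_def)
  finally show ?thesis .
qed

lemma equilibrium_state_of_Ih_pos:
  fixes \<beta>h \<beta>v \<mu>h \<mu>v Cvh Chv Ih :: real
  assumes "\<beta>h > 0" "\<beta>v > 0" "\<mu>h > 0" "\<mu>v > 0" "Cvh > 0" "Chv > 0" "Ih > 0"
    and linear: "Ih * (\<mu>h * Chv * (Cvh + \<mu>h)) = Cvh * Chv * \<beta>h - \<mu>h\<^sup>2 * \<mu>v"
  shows "\<beta>h / \<mu>h - Ih > 0" "\<beta>v / (\<mu>v + Chv * Ih) > 0" "\<beta>v / \<mu>v - \<beta>v / (\<mu>v + Chv * Ih) > 0"
proof -
  have "0 < \<mu>h\<^sup>2 * \<mu>v + Chv * \<beta>h * \<mu>h"
    using assms by (simp add: add_pos_pos)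
  then have "(\<mu>h * Ih) * (Chv * (Cvh + \<mu>h)) < \<beta>h * (Chv * (Cvh + \<mu>h))"
    using linear by (simp add: algebra_simps)
  then have "\<mu>h * Ih < \<beta>h"
    using assms by (simp add: mult_less_cancel_right)
  then show "\<beta>h / \<mu>h - Ih > 0"
    using assms by (simp add: field_simps)
  show "\<beta>v / (\<mu>v + Chv * Ih) > 0"
    using assms by (simp add: add_pos_pos)
  have "\<beta>v / (\<mu>v + Chv * Ih) < \<beta>v / \<mu>v"
    using assms by (intro divide_strict_left_mono) (auto simp: add_pos_pos)
  then show "\<beta>v / \<mu>v - \<beta>v / (\<mu>v + Chv * Ih) > 0"
    by simp
qed

lemma endemic_equilibrium_iff:
  fixes \<beta>h \<beta>v \<mu>h \<mu>v Cvh Chv :: real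
  assumes "\<beta>h > 0" "\<beta>v > 0" "\<mu>h > 0" "\<mu>v > 0" "Cvh > 0" "Chv > 0"
  shows "is_endemic_equilibrium \<beta>h \<beta>v \<mu>h \<mu>v Cvh Chv E \<longleftrightarrow>
    (\<exists>Ih > 0. Ih * (\<mu>h * Chv * (Cvh + \<mu>h)) = Cvh * Chv * \<beta>h - \<mu>h\<^sup>2 * \<mu>v \<and>
              E = equilibrium_state_of_Ih \<beta>h \<beta>v \<mu>h \<mu>v Chv Ih)"
proof -
  obtain Sh Ih Sv Iv where E: "E = (Sh, Ih, Sv, Iv)"
    by (cases E) auto
  show ?thesis
    using equilibrium_with_infected_hosts_iff[of \<beta>v \<mu>h \<mu>v Chv Ih \<beta>h Cvh Sh Sv Iv]
      equilibrium_state_of_Ih_pos[of \<beta>h \<beta>v \<mu>h \<mu>v Cvh Chv Ih] assms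
    by (auto simp: E is_endemic_equilibrium_def equilibrium_state_of_Ih_def)
qed

lemma R0_gt_1_iff:
  fixes \<beta>h \<beta>v \<mu>h \<mu>v Cvh Chv :: real
  assumes "\<mu>h > 0" "\<mu>v > 0"
  shows "R0 \<beta>h \<beta>v \<mu>h \<mu>v Cvh Chv > 1 \<longleftrightarrow> Cvh * Chv * \<beta>h - \<mu>h\<^sup>2 * \<mu>v > 0"
  using assms by (simp add: R0_def field_simps)

theorem lemma1:
  fixes \<beta>h \<beta>v \<mu>h \<mu>v Cvh Chv \<tau> :: real
  assumes "\<beta>h > 0" "\<beta>v > 0" "\<mu>h > 0" "\<mu>v > 0" "Cvh > 0" "Chv > 0" "\<tau> \<ge> 0"
  shows "(\<exists>!E. is_endemic_equilibrium \<beta>h \<beta>v \<mu>h \<mu>v Cvh Chv E) \<longleftrightarrow>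
         R0 \<beta>h \<beta>v \<mu>h \<mu>v Cvh Chv > 1"
proof -
  let ?a = "\<mu>h * Chv * (Cvh + \<mu>h)" and ?b = "Cvh * Chv * \<beta>h - \<mu>h\<^sup>2 * \<mu>v"
  let ?state = "equilibrium_state_of_Ih \<beta>h \<beta>v \<mu>h \<mu>v Chv"
  have "?a > 0"
    using assms by simp
  then have "Ih * ?a = ?b \<longleftrightarrow> Ih = ?b / ?a" for Ih
    by (metis nonzero_eq_divide_eq less_irrefl)
  then have "is_endemic_equilibrium \<beta>h \<beta>v \<mu>h \<mu>v Cvh Chv E \<longleftrightarrow> ?b / ?a > 0 \<and> E = ?state (?b / ?a)"
    for E
    using endemic_equilibrium_iff[OF assms(1-6)] by auto
  then have "(\<exists>!E. is_endemic_equilibrium \<beta>h \<beta>v \<mu>h \<mu>v Cvh Chv E) \<longleftrightarrow> ?b / ?a > 0"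
    by metis
  also have "\<dots> \<longleftrightarrow> ?b > 0"
    using \<open>?a > 0\<close> by (simp add: zero_less_divide_iff)
  also have "\<dots> \<longleftrightarrow> R0 \<beta>h \<beta>v \<mu>h \<mu>v Cvh Chv > 1"
    using R0_gt_1_iff assms by simp
  finally show ?thesis .
qed

end
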